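(* Let $(N_r)_{r\in\mathbb{Z}}$ be the Narayana sequence, let $a,b,r$ be integers with $1\le b\le a$ and $m=ar+b>a$. Then for every integer $s\ge 0$ there exist integers $\alpha,\beta,\gamma$ such that $$N_{ar+b}=\alpha N_{a(s+2)+b}+\beta N_{a(s+1)+b}+\gamma N_{as+b};$$ in particular (taking $s=0$) $N_m$ is an integer linear combination of $N_{2a+b}$, $N_{a+b}$ and $N_b$.
   Context: The Narayana sequence $(N_r)_{r\in\mathbb{Z}}$ is defined by $N_0=0$, $N_1=N_2=1$ and $N_r=N_{r-1}+N_{r-3}$ for all integers $r$ (extended to negative indices via $N_{r-3}=N_r-N_{r-1}$). The numbers $N_b, N_{a+b}, N_{2a+b},\dots$ are the entries of the $b$-th column of the table whose rows are $(N_{ka+1},\dots,N_{ka+a})$, $k=0,1,2,\dots$; the claim says $N_{ar+b}$ is an integer combination of any three consecutive entries of this column. *)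

theory Defs
  imports Main
begin

fun nar_pos :: "nat \<Rightarrow> int" where
  "nar_pos 0 = 0"
| "nar_pos (Suc 0) = 1"
| "nar_pos (Suc (Suc 0)) = 1"
| "nar_pos (Suc (Suc (Suc n))) = nar_pos (Suc (Suc n)) + nar_pos n"

text \<open>nar_neg n is N at index -n, via N(r-3) = N(r) - N(r-1).\<close>
fun nar_neg :: "nat \<Rightarrow> int" where
  "nar_neg 0 = 0"
| "nar_neg (Suc 0) = 0"
| "nar_neg (Suc (Suc 0)) = 1"
| "nar_neg (Suc (Suc (Suc n))) = nar_neg n - nar_neg (Suc n)"

definition narayana :: "int \<Rightarrow> int" where
  "narayana r = (if r \<ge> 0 then nar_pos (nat r) else nar_neg (nat (- r)))"

end

theory Submission
  imports Defs
begin

text \<open>Shifting the index by a multiplies the vector (N n, N (n+1), N (n+2)) by a fixed integer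
  3x3 matrix M, a power of the companion matrix, hence of determinant 1. By Cayley-Hamilton the
  subsequence h k = N (a k + b) then satisfies h (k+3) = t h (k+2) - c h (k+1) + h k with
  integers t, c; as the last coefficient is a unit the recurrence can be run in both directions,
  so every h r lies in the integer span of any three consecutive values.\<close>

lemma narayana_of_nat: "narayana (int n) = nar_pos n"
  by (simp add: narayana_def)

lemma narayana_neg_of_nat: "narayana (- int n) = nar_neg n"
  by (cases n) (simp_all add: narayana_def nat_add_distrib)

lemma narayana_rec: "narayana (n + 3) = narayana (n + 2) + narayana n"
proof -
  consider m where "n = int m" | "n = -1" | "n = -2" | m where "n = - int m - 3"
  proof -
    have "n \<ge> 0 \<or> n = -1 \<or> n = -2 \<or> n = - int (nat (- n - 3)) - 3" by auto
    then show ?thesis using that by (metis nonneg_eq_int)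
  qed
  then show ?thesis
  proof cases
    case (1 m)
    have "int m + 3 = int (Suc (Suc (Suc m)))" "int m + 2 = int (Suc (Suc m))" by simp_all
    then show ?thesis by (simp only: 1 narayana_of_nat) simp
  next
    case 2
    then show ?thesis by (simp add: narayana_def numeral_eq_Suc)
  next
    case 3
    then show ?thesis by (simp add: narayana_def numeral_eq_Suc)
  next
    case (4 m)
    have "n + 3 = - int m" "n + 2 = - int (Suc m)" "n = - int (Suc (Suc (Suc m)))"
      using 4 by simp_all
    then show ?thesis by (simp only: narayana_neg_of_nat) simp
  qed
qed

definition int_span3 :: "int \<Rightarrow> int \<Rightarrow> int \<Rightarrow> int set" where
  "int_span3 x y z = {\<alpha> * x + \<beta> * y + \<gamma> * z | \<alpha> \<beta> \<gamma>. True}"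

lemma int_span3_generators: "x \<in> int_span3 x y z" "y \<in> int_span3 x y z" "z \<in> int_span3 x y z"
  unfolding int_span3_def
  by (force intro: exI[of _ 1] exI[of _ 0])+

lemma int_span3_lincomb:
  assumes "u \<in> int_span3 x y z" "v \<in> int_span3 x y z" "w \<in> int_span3 x y z"
  shows "p * u + q * v + r * w \<in> int_span3 x y z"
proof -
  obtain \<alpha>1 \<beta>1 \<gamma>1 \<alpha>2 \<beta>2 \<gamma>2 \<alpha>3 \<beta>3 \<gamma>3 where
    "u = \<alpha>1 * x + \<beta>1 * y + \<gamma>1 * z" "v = \<alpha>2 * x + \<beta>2 * y + \<gamma>2 * z" "w = \<alpha>3 * x + \<beta>3 * y + \<gamma>3 * z"
    using assms unfolding int_span3_def by blast
  then have "p * u + q * v + r * w = (p * \<alpha>1 + q * \<alpha>2 + r * \<alpha>3) * x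
      + (p * \<beta>1 + q * \<beta>2 + r * \<beta>3) * y + (p * \<gamma>1 + q * \<gamma>2 + r * \<gamma>3) * z"
    by (simp add: algebra_simps)
  then show ?thesis unfolding int_span3_def by blast
qed

lemma unimodular_recurrence_in_int_span3:
  fixes h :: "int \<Rightarrow> int"
  assumes rec: "\<And>k. h (k + 3) = p * h (k + 2) + q * h (k + 1) + h k"
  shows "h r \<in> int_span3 (h (s + 2)) (h (s + 1)) (h s)"
proof -
  let ?S = "int_span3 (h (s + 2)) (h (s + 1)) (h s)"
  have "h (s + j) \<in> ?S \<and> h (s + j + 1) \<in> ?S \<and> h (s + j + 2) \<in> ?S" for j
  proof (induction j rule: int_induct[where k = 0])
    case base
    then show ?case by (simp add: int_span3_generators)
  next
    case (step1 j)
    have "h (s + j + 3) = p * h (s + j + 2) + q * h (s + j + 1) + 1 * h (s + j)"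
      using rec[of "s + j"] by (simp add: add.assoc)
    then have "h (s + j + 3) \<in> ?S"
      using step1 int_span3_lincomb by presburger
    with step1 show ?case by (simp add: add.assoc)
  next
    case (step2 j)
    have "h (s + j - 1) = 1 * h (s + j + 2) + (- p) * h (s + j + 1) + (- q) * h (s + j)"
      using rec[of "s + j - 1"] by (simp add: algebra_simps)
    then have "h (s + j - 1) \<in> ?S"
      using step2 int_span3_lincomb by presburger
    with step2 show ?case by (simp add: algebra_simps)
  qed
  from this[of "r - s"] show ?thesis by simp
qed

datatype mat3 = Mat3 int int int int int int int int int

fun mat3_apply :: "mat3 \<Rightarrow> int \<times> int \<times> int \<Rightarrow> int \<times> int \<times> int" where
  "mat3_apply (Mat3 a b c d e f g h i) (x, y, z) =
     (a * x + b * y + c * z, d * x + e * y + f * z, g * x + h * y + i * z)"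

fun det3 :: "mat3 \<Rightarrow> int" where
  "det3 (Mat3 a b c d e f g h i) = a * (e * i - f * h) - b * (d * i - f * g) + c * (d * h - e * g)"

fun trace3 :: "mat3 \<Rightarrow> int" where
  "trace3 (Mat3 a b c d e f g h i) = a + e + i"

fun principal_minors3 :: "mat3 \<Rightarrow> int" where
  "principal_minors3 (Mat3 a b c d e f g h i) = (a * e - b * d) + (a * i - c * g) + (e * i - f * h)"

lemma mat3_cayley_hamilton_fst:
  "fst (mat3_apply M (mat3_apply M (mat3_apply M v))) =
     trace3 M * fst (mat3_apply M (mat3_apply M v)) - principal_minors3 M * fst (mat3_apply M v)
     + det3 M * fst v"
  by (cases M; cases v) (simp add: algebra_simps)

text \<open>Left multiplication by the companion matrix ((0,1,0),(0,0,1),(1,0,1)) of the Narayana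
  recurrence.\<close>

fun companion_mult :: "mat3 \<Rightarrow> mat3" where
  "companion_mult (Mat3 a b c d e f g h i) = Mat3 d e f g h i (a + g) (b + h) (c + i)"

lemma det3_companion_mult: "det3 (companion_mult M) = det3 M"
  by (cases M) (simp add: algebra_simps)

lemma mat3_apply_companion_mult:
  "mat3_apply (companion_mult M) v = (case mat3_apply M v of (x, y, z) \<Rightarrow> (y, z, x + z))"
  by (cases M; cases v) (simp add: algebra_simps)

definition window3 :: "(int \<Rightarrow> int) \<Rightarrow> int \<Rightarrow> int \<times> int \<times> int" where
  "window3 f n = (f n, f (n + 1), f (n + 2))"

lemma narayana_recurrence_shift_matrix:
  fixes f :: "int \<Rightarrow> int"
  assumes rec: "\<And>n. f (n + 3) = f (n + 2) + f n"
  shows "\<exists>M. det3 M = 1 \<and> (\<forall>n. window3 f (n + int a) = mat3_apply M (window3 f n))"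
proof (induction a)
  case 0
  show ?case
    by (rule exI[of _ "Mat3 1 0 0 0 1 0 0 0 1"]) (simp add: window3_def)
next
  case (Suc a)
  then obtain M where M: "det3 M = 1" "\<And>n. window3 f (n + int a) = mat3_apply M (window3 f n)"
    by blast
  have window3_step: "window3 f (n + 1) = (case window3 f n of (x, y, z) \<Rightarrow> (y, z, x + z))" for n
    using rec[of n] by (simp add: window3_def add.assoc)
  have "window3 f (n + int (Suc a)) = mat3_apply (companion_mult M) (window3 f n)" for n
    using window3_step[of "n + int a"] M(2)[of n]
    by (simp add: mat3_apply_companion_mult ac_simps)
  with M(1) show ?case
    by (metis det3_companion_mult)
qed

lemma arithmetic_subsequence_recurrence:
  fixes v :: "int \<Rightarrow> int \<times> int \<times> int"
  assumes shift: "\<And>n. v (n + a) = mat3_apply M (v n)"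
  shows "fst (v (a * (k + 3) + b)) = trace3 M * fst (v (a * (k + 2) + b))
           - principal_minors3 M * fst (v (a * (k + 1) + b)) + det3 M * fst (v (a * k + b))"
proof -
  have step: "v (a * (j + 1) + b) = mat3_apply M (v (a * j + b))" for j
    using shift[of "a * j + b"] by (simp add: algebra_simps)
  have "v (a * (k + 1) + b) = mat3_apply M (v (a * k + b))"
    using step[of k] .
  moreover have "v (a * (k + 2) + b) = mat3_apply M (mat3_apply M (v (a * k + b)))"
    using step[of "k + 1"] step[of k] by (simp add: add.assoc)
  moreover have "v (a * (k + 3) + b) = mat3_apply M (mat3_apply M (mat3_apply M (v (a * k + b))))"
    using step[of "k + 2"] step[of "k + 1"] step[of k] by (simp add: add.assoc)
  ultimately show ?thesis
    by (simp only: mat3_cayley_hamilton_fst)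
qed

theorem theorem5:
  fixes a b r :: int
  assumes "1 \<le> b" and "b \<le> a" and "a * r + b > a"
  shows "\<forall>s::int. s \<ge> 0 \<longrightarrow>
           (\<exists>\<alpha> \<beta> \<gamma> :: int. narayana (a * r + b) =
              \<alpha> * narayana (a * (s + 2) + b) + \<beta> * narayana (a * (s + 1) + b)
              + \<gamma> * narayana (a * s + b))"
proof (intro allI impI)
  fix s :: int
  have "a \<ge> 0" using assms(1,2) by simp
  obtain M where M: "det3 M = 1" "\<And>n. window3 narayana (n + a) = mat3_apply M (window3 narayana n)"
    using narayana_recurrence_shift_matrix[OF narayana_rec, of "nat a"] \<open>a \<ge> 0\<close> by auto
  define h where "h k = narayana (a * k + b)" for k
  have "h (k + 3) = trace3 M * h (k + 2) + (- principal_minors3 M) * h (k + 1) + h k" for k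
    using arithmetic_subsequence_recurrence[where v = "window3 narayana", OF M(2), of k b] M(1)
    by (simp add: h_def window3_def)
  then have "h r \<in> int_span3 (h (s + 2)) (h (s + 1)) (h s)"
    by (rule unimodular_recurrence_in_int_span3)
  then show "\<exists>\<alpha> \<beta> \<gamma> :: int. narayana (a * r + b) =
              \<alpha> * narayana (a * (s + 2) + b) + \<beta> * narayana (a * (s + 1) + b)
              + \<gamma> * narayana (a * s + b)"
    by (simp add: h_def int_span3_def)
qed

end
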